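(* Let $\mathcal{G}(t)$ be a matrix-weighted switching network satisfying Assumption 1 (described in the context), with matrix-valued Laplacian $L^k$ on $[t_k,t_{k+1})$ and $\Delta t_k=t_{k+1}-t_k$. For integers $0\le k'<k''$, let $$\Phi(t_{k''},t_{k'})=e^{-L^{k''-1}\Delta t_{k''-1}}\cdots e^{-L^{k'}\Delta t_{k'}},$$ and let $\widetilde{L}_{[t_{k'},t_{k''})}=\frac{1}{t_{k''}-t_{k'}}\int_{t_{k'}}^{t_{k''}}L(t)dt$. Let $m=\dim\mathrm{null}(\widetilde{L}_{[t_{k'},t_{k''})})$ with $m<dn$, and let $\mu_1\ge\mu_2\ge\cdots\ge\mu_{dn}$ be the eigenvalues of $\Phi(t_{k''},t_{k'})^\top\Phi(t_{k''},t_{k'})$ in nonincreasing order (so that $\mu_1=\dots=\mu_m=1$). Then $$\mu_{m+1}\big(\Phi(t_{k''},t_{k'})^\top\Phi(t_{k''},t_{k'})\big)<1.$$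
   Context: A matrix-weighted switching network $\mathcal{G}(t)=(\mathcal{V},\mathcal{E}(t),A(t))$ has node set $\mathcal{V}=\{1,\dots,n\}$, $n>1$; each edge $(i,j)\in\mathcal{E}(t)$ carries a symmetric weight $A_{ij}(t)\in\mathbb{R}^{d\times d}$ which is either positive (semi-)definite or negative (semi-)definite, with $A_{ij}=A_{ji}$, $A_{ii}=0$, $A_{ij}(t)=0$ if $(i,j)\notin\mathcal{E}(t)$; standing assumption: for each pair $(i,j)$ the weight $A_{ij}(t)$ has the same sign type for all $t$. Set $|A_{ij}|=A_{ij}$ if $A_{ij}\succeq0$ and $-A_{ij}$ if $A_{ij}\preceq0$. With $A=[A_{ij}]\in\mathbb{R}^{dn\times dn}$ and $D=\mathrm{diag}(D_1,\dots,D_n)$, $D_i=\sum_{j:(i,j)\in\mathcal{E}}|A_{ij}|$, the matrix-valued Laplacian is $L=D-A$. Assumption 1: there is a sequence $\{t_k\}_{k\in\mathbb{N}}$ with $t_0=0$, $t_k\to\infty$, $t_{k+1}-t_k\ge\alpha>0$, and $\mathcal{G}(t)$ is constant on each $[t_k,t_{k+1})$. *)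

theory Defs
  imports "HOL-Analysis.Analysis" "Jordan_Normal_Form.Char_Poly" "Jordan_Normal_Form.Matrix_Kernel"
begin

definition psd_mat :: "nat \<Rightarrow> real mat \<Rightarrow> bool" where
  "psd_mat d B \<longleftrightarrow> B \<in> carrier_mat d d \<and> (\<forall>x \<in> carrier_vec d. 0 \<le> x \<bullet> (B *\<^sub>v x))"

definition nsd_mat :: "nat \<Rightarrow> real mat \<Rightarrow> bool" where
  "nsd_mat d B \<longleftrightarrow> psd_mat d (- B)"

definition abs_w :: "nat \<Rightarrow> real mat \<Rightarrow> real mat" where
  "abs_w d B = (if psd_mat d B then B else - B)"

text \<open>Row index p corresponds to node p div d, component p mod d.
  D_i = sum of |A_ij| over j (non-edges have A_ij = 0, so |A_ij| = 0).\<close>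
definition mw_laplacian :: "nat \<Rightarrow> nat \<Rightarrow> (nat \<Rightarrow> nat \<Rightarrow> real mat) \<Rightarrow> real mat" where
  "mw_laplacian d n W = mat (d * n) (d * n) (\<lambda>(p, q).
     (if p div d = q div d then (\<Sum>l<n. abs_w d (W (p div d) l) $$ (p mod d, q mod d)) else 0)
     - W (p div d) (q div d) $$ (p mod d, q mod d))"

definition mat_exp :: "real mat \<Rightarrow> real mat" where
  "mat_exp B = mat (dim_row B) (dim_col B) (\<lambda>(i, j). \<Sum>k. (B ^\<^sub>m k) $$ (i, j) / fact k)"

fun trans_mat :: "nat \<Rightarrow> (nat \<Rightarrow> real mat) \<Rightarrow> (nat \<Rightarrow> real) \<Rightarrow> nat \<Rightarrow> nat \<Rightarrow> real mat" where
  "trans_mat N Lk tk k0 0 = 1\<^sub>m N"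
| "trans_mat N Lk tk k0 (Suc j) =
     mat_exp (- ((tk (Suc (k0 + j)) - tk (k0 + j)) \<cdot>\<^sub>m Lk (k0 + j))) * trans_mat N Lk tk k0 j"

text \<open>Eigenvalues (with algebraic multiplicity, as roots of the characteristic
  polynomial) in nonincreasing order; index 0 is mu_1.\<close>
definition eigs_desc :: "real mat \<Rightarrow> real list" where
  "eigs_desc B = rev (sorted_list_of_multiset (proots (char_poly B)))"

end

theory Submission
  imports Defs
begin

text \<open>Every \<open>L\<^sup>k\<close> is symmetric positive semidefinite, so each factor
  \<open>exp(-L\<^sup>k \<Delta>t\<^sub>k)\<close> of \<open>\<Phi>\<close> is a contraction that preserves the norm of \<open>x\<close> only
  if \<open>L\<^sup>k x = 0\<close>. Hence \<open>\<Phi>\<close> is a contraction, and \<open>\<parallel>\<Phi> x\<parallel> = \<parallel>x\<parallel>\<close> forces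
  \<open>L\<^sup>k x = 0\<close> for all \<open>k' \<le> k < k''\<close>, so \<open>x\<close> lies in the null space of the
  averaged Laplacian, a convex combination of these \<open>L\<^sup>k\<close>. Diagonalising
  \<open>\<Phi>\<^sup>T \<Phi> = V diag(\<mu>) V\<^sup>T\<close>, each \<open>\<mu>\<^sub>l = \<parallel>\<Phi> v\<^sub>l\<parallel>\<^sup>2 \<le> 1\<close>, and the columns
  \<open>v\<^sub>l\<close> with \<open>\<mu>\<^sub>l = 1\<close> form an orthonormal family in that null space. So at most
  \<open>m\<close> eigenvalues equal \<open>1\<close>, and the \<open>(m+1)\<close>-st largest is below \<open>1\<close>.\<close>

section \<open>Orthogonal diagonalisation\<close>

definition orthogonal_mat :: "nat \<Rightarrow> real mat \<Rightarrow> bool" where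
  "orthogonal_mat n U \<longleftrightarrow> U \<in> carrier_mat n n \<and> U\<^sup>T * U = 1\<^sub>m n \<and> U * U\<^sup>T = 1\<^sub>m n"

lemma orthogonal_matI:
  assumes "U \<in> carrier_mat n n" "U\<^sup>T * U = 1\<^sub>m n"
  shows "orthogonal_mat n U"
  using assms mat_mult_left_right_inverse[of "U\<^sup>T" n U] by (auto simp: orthogonal_mat_def)

lemma orthogonal_matD:
  assumes "orthogonal_mat n U"
  shows "U \<in> carrier_mat n n" "U\<^sup>T * U = 1\<^sub>m n" "U * U\<^sup>T = 1\<^sub>m n"
  using assms by (auto simp: orthogonal_mat_def)

lemma orthogonal_mat_mult:
  assumes A: "orthogonal_mat n A" and B: "orthogonal_mat n B"
  shows "orthogonal_mat n (A * B)"
proof (rule orthogonal_matI)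
  note A' = orthogonal_matD[OF A] and B' = orthogonal_matD[OF B]
  show "A * B \<in> carrier_mat n n" using A' B' by simp
  have "(A * B)\<^sup>T * (A * B) = B\<^sup>T * (A\<^sup>T * A) * B"
    using A'(1) B'(1) by (simp add: transpose_mult assoc_mult_mat[of _ n n _ n _ n])
  also have "\<dots> = B\<^sup>T * B" using A' B' by simp
  finally show "(A * B)\<^sup>T * (A * B) = 1\<^sub>m n" using B' by simp
qed

lemma orthogonal_mat_transpose:
  assumes "orthogonal_mat n U"
  shows "orthogonal_mat n U\<^sup>T"
  using orthogonal_matD[OF assms] by (simp add: orthogonal_mat_def)

lemma orthogonal_mat_mult_vec_cancel:
  assumes U: "orthogonal_mat n U" and x: "x \<in> carrier_vec n"
  shows "U *\<^sub>v (U\<^sup>T *\<^sub>v x) = x" "U\<^sup>T *\<^sub>v (U *\<^sub>v x) = x"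
  using orthogonal_matD[OF U] x
  by (simp_all add: assoc_mult_mat_vec[symmetric, of _ n n _ n])

lemma orthogonal_mat_inner:
  assumes U: "orthogonal_mat n U" and a: "a \<in> carrier_vec n" and b: "b \<in> carrier_vec n"
  shows "(U *\<^sub>v a) \<bullet> (U *\<^sub>v b) = a \<bullet> b"
proof -
  have Uc: "U \<in> carrier_mat n n" using orthogonal_matD[OF U] by simp
  have "(U\<^sup>T *\<^sub>v (U *\<^sub>v a)) \<bullet> b = (U *\<^sub>v a) \<bullet> (U *\<^sub>v b)"
    using Uc a b by (intro transpose_vec_mult_scalar) auto
  then show ?thesis using orthogonal_mat_mult_vec_cancel(2)[OF U a] by simp
qed

lemma mat_diag_mult_vec:
  assumes "y \<in> carrier_vec n"
  shows "mat_diag n f *\<^sub>v y = vec n (\<lambda>i. f i * y $ i)"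
proof (rule eq_vecI)
  fix i assume "i < dim_vec (vec n (\<lambda>i. f i * y $ i))"
  then have i: "i < n" by simp
  have "(mat_diag n f *\<^sub>v y) $ i = (\<Sum>k\<in>{0..<n}. (if i = k then f k else 0) * y $ k)"
    using assms i by (simp add: mat_diag_def scalar_prod_def)
  also have "\<dots> = f i * y $ i"
    using i by (simp add: if_distrib[of "\<lambda>c. c * _"] cong: if_cong)
  finally show "(mat_diag n f *\<^sub>v y) $ i = vec n (\<lambda>i. f i * y $ i) $ i" using i by simp
qed (simp add: mat_diag_def)

lemma sandwich_index:
  assumes U: "U \<in> carrier_mat n n" and ij: "i < n" "j < n"
  shows "(U * mat_diag n f * U\<^sup>T) $$ (i, j) = (\<Sum>k<n. U $$ (i, k) * f k * U $$ (j, k))"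
  using U ij by (simp add: mat_diag_mult_right[OF U] scalar_prod_def atLeast0LessThan)

lemma sandwich_carrier [simp]:
  "U \<in> carrier_mat n n \<Longrightarrow> U * mat_diag n f * U\<^sup>T \<in> carrier_mat n n"
  by (meson mat_diag_dim mult_carrier_mat transpose_carrier_mat)

lemma sandwich_mult_vec:
  assumes U: "U \<in> carrier_mat n n" and x: "x \<in> carrier_vec n"
  shows "(U * mat_diag n f * U\<^sup>T) *\<^sub>v x = U *\<^sub>v vec n (\<lambda>l. f l * (U\<^sup>T *\<^sub>v x) $ l)"
  using U x by (simp add: assoc_mult_mat_vec[of _ n n _ n] mat_diag_mult_vec)

lemma scalar_prod_self_sum:
  fixes y :: "real vec"
  assumes "y \<in> carrier_vec n"
  shows "y \<bullet> y = (\<Sum>l<n. (y $ l)\<^sup>2)"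
  using assms by (simp add: scalar_prod_def power2_eq_square atLeast0LessThan)

lemma orthogonal_coords_sq_norm:
  assumes U: "orthogonal_mat n U" and x: "x \<in> carrier_vec n"
  shows "x \<bullet> x = (\<Sum>l<n. ((U\<^sup>T *\<^sub>v x) $ l)\<^sup>2)"
proof -
  have "x \<bullet> x = (U\<^sup>T *\<^sub>v x) \<bullet> (U\<^sup>T *\<^sub>v x)"
    using orthogonal_mat_inner[OF orthogonal_mat_transpose[OF U] x x] by simp
  also have "\<dots> = (\<Sum>l<n. ((U\<^sup>T *\<^sub>v x) $ l)\<^sup>2)"
    using orthogonal_matD(1)[OF U] x by (intro scalar_prod_self_sum) simp
  finally show ?thesis .
qed

lemma sandwich_sq_norm:
  assumes U: "orthogonal_mat n U" and x: "x \<in> carrier_vec n"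
  shows "((U * mat_diag n f * U\<^sup>T) *\<^sub>v x) \<bullet> ((U * mat_diag n f * U\<^sup>T) *\<^sub>v x)
       = (\<Sum>l<n. (f l * (U\<^sup>T *\<^sub>v x) $ l)\<^sup>2)"
proof -
  have Uc: "U \<in> carrier_mat n n" using orthogonal_matD[OF U] by simp
  let ?z = "vec n (\<lambda>l. f l * (U\<^sup>T *\<^sub>v x) $ l)"
  have "((U * mat_diag n f * U\<^sup>T) *\<^sub>v x) \<bullet> ((U * mat_diag n f * U\<^sup>T) *\<^sub>v x) = ?z \<bullet> ?z"
    unfolding sandwich_mult_vec[OF Uc x] by (rule orthogonal_mat_inner[OF U]) auto
  also have "\<dots> = (\<Sum>l<n. (f l * (U\<^sup>T *\<^sub>v x) $ l)\<^sup>2)"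
    by (subst scalar_prod_self_sum[of _ n]) auto
  finally show ?thesis .
qed

lemma sandwich_quadratic_form:
  assumes U: "orthogonal_mat n U" and x: "x \<in> carrier_vec n"
  shows "x \<bullet> ((U * mat_diag n f * U\<^sup>T) *\<^sub>v x) = (\<Sum>l<n. f l * ((U\<^sup>T *\<^sub>v x) $ l)\<^sup>2)"
proof -
  have Uc: "U \<in> carrier_mat n n" using orthogonal_matD[OF U] by simp
  let ?y = "U\<^sup>T *\<^sub>v x"
  have "x \<bullet> (U *\<^sub>v vec n (\<lambda>l. f l * ?y $ l)) = ?y \<bullet> vec n (\<lambda>l. f l * ?y $ l)"
    using Uc x by (intro transpose_vec_mult_scalar[symmetric]) auto
  then show ?thesis
    using Uc by (simp add: sandwich_mult_vec[OF Uc x] scalar_prod_def power2_eq_square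
        atLeast0LessThan mult_ac)
qed

lemma sandwich_quadratic_form_unit_vec:
  assumes U: "orthogonal_mat n U" and l: "l < n"
  shows "(U *\<^sub>v unit_vec n l) \<bullet> ((U * mat_diag n f * U\<^sup>T) *\<^sub>v (U *\<^sub>v unit_vec n l)) = f l"
proof -
  have Uc: "U \<in> carrier_mat n n" using orthogonal_matD[OF U] by simp
  have "U\<^sup>T *\<^sub>v (U *\<^sub>v unit_vec n l) = unit_vec n l"
    by (rule orthogonal_mat_mult_vec_cancel(2)[OF U]) simp
  then show ?thesis
    using l Uc by (simp add: sandwich_quadratic_form[OF U] unit_vec_def power2_eq_square
        if_distrib[of "\<lambda>x. _ * x"] cong: if_cong)
qed

lemma proots_prod_list_linear: "proots (\<Prod>a\<leftarrow>xs. [:- a, 1:]) = mset (xs :: real list)"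
proof (induction xs)
  case (Cons a xs)
  have "(\<Prod>a\<leftarrow>xs. [:- a, 1:]) \<noteq> (0 :: real poly)" by (auto simp: prod_list_zero_iff)
  then have "proots ([:- a, 1:] * (\<Prod>a\<leftarrow>xs. [:- a, 1:])) = proots [:- a, 1:] + mset xs"
    using Cons by (subst proots_mult) auto
  then show ?case using proots_linear_factor[of "- a"] by (simp only: list.map prod_list.Cons) simp
qed simp

lemma eigs_desc_sandwich:
  assumes U: "orthogonal_mat n U"
  shows "eigs_desc (U * mat_diag n f * U\<^sup>T) = rev (sort (map f [0..<n]))"
proof -
  note U' = orthogonal_matD[OF U]
  have "similar_mat (U * mat_diag n f * U\<^sup>T) (mat_diag n f)"
    unfolding similar_mat_def similar_mat_wit_def Let_def
    by (intro exI[of _ U] exI[of _ "U\<^sup>T"]) (use U' in auto)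
  then have "char_poly (U * mat_diag n f * U\<^sup>T) = char_poly (mat_diag n f)"
    by (rule char_poly_similar)
  also have "\<dots> = (\<Prod>a\<leftarrow>diag_mat (mat_diag n f). [:- a, 1:])"
    by (rule char_poly_upper_triangular[OF mat_diag_dim]) (simp add: upper_triangular_def mat_diag_def)
  also have "diag_mat (mat_diag n f) = map f [0..<n]"
    by (rule nth_equalityI) (auto simp: diag_mat_def mat_diag_def)
  finally have char_poly_eq: "char_poly (U * mat_diag n f * U\<^sup>T) = (\<Prod>a\<leftarrow>map f [0..<n]. [:- a, 1:])" .
  show ?thesis
    unfolding eigs_desc_def char_poly_eq proots_prod_list_linear sorted_list_of_multiset_mset ..
qed

section \<open>The spectral theorem for real symmetric matrices\<close>

lemma symmetric_mat_swap:
  assumes "M \<in> carrier_mat n n" "M\<^sup>T = M" "a < n" "b < n"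
  shows "M $$ (b, a) = M $$ (a, b)"
  using assms by (metis carrier_matD index_transpose_mat(1))

lemma real_symmetric_form_cnj:
  fixes A :: "real mat" and w :: "complex vec"
  assumes A: "A \<in> carrier_mat n n" and sym: "A\<^sup>T = A"
  defines "S \<equiv> \<Sum>i\<in>{0..<n}. cnj (w $ i) * (\<Sum>j\<in>{0..<n}. of_real (A $$ (i, j)) * w $ j)"
  shows "cnj S = S"
proof -
  have "cnj S = (\<Sum>i\<in>{0..<n}. \<Sum>j\<in>{0..<n}. w $ i * of_real (A $$ (i, j)) * cnj (w $ j))"
    unfolding S_def by (simp add: sum_distrib_left mult_ac)
  also have "\<dots> = (\<Sum>j\<in>{0..<n}. \<Sum>i\<in>{0..<n}. w $ i * of_real (A $$ (i, j)) * cnj (w $ j))"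
    by (rule sum.swap)
  also have "\<dots> = S"
    unfolding S_def by (auto simp: sum_distrib_left mult_ac symmetric_mat_swap[OF A sym] intro!: sum.cong)
  finally show ?thesis .
qed

text \<open>A complex eigenvalue \<open>z\<close> with eigenvector \<open>w\<close> satisfies
  \<open>z \<parallel>w\<parallel>\<^sup>2 = w\<^sup>* A w\<close>, which is real by symmetry; so \<open>z\<close> is a real root of the
  characteristic polynomial.\<close>
lemma real_symmetric_eigenvector:
  fixes A :: "real mat"
  assumes A: "A \<in> carrier_mat n n" and sym: "A\<^sup>T = A" and n: "n > 0"
  obtains e v where "v \<in> carrier_vec n" "v \<noteq> 0\<^sub>v n" "A *\<^sub>v v = e \<cdot>\<^sub>v v"
proof -
  define Ac where "Ac = map_mat complex_of_real A"
  have Ac: "Ac \<in> carrier_mat n n" using A by (simp add: Ac_def)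
  have cp: "char_poly Ac = map_poly complex_of_real (char_poly A)"
    unfolding Ac_def by (rule of_real_hom.char_poly_hom[OF A])
  have "\<not> constant (poly (char_poly Ac))"
    using degree_monic_char_poly[OF A] n cp by (simp add: constant_degree)
  then obtain z where "poly (char_poly Ac) z = 0" using fundamental_theorem_of_algebra by blast
  then obtain w where w: "w \<in> carrier_vec n" "w \<noteq> 0\<^sub>v n" "Ac *\<^sub>v w = z \<cdot>\<^sub>v w"
    using eigenvalue_root_char_poly[OF Ac] Ac unfolding eigenvalue_def eigenvector_def by auto
  define r where "r = (\<Sum>i\<in>{0..<n}. (cmod (w $ i))\<^sup>2)"
  obtain i where i: "i < n" "w $ i \<noteq> 0" using w by (metis carrier_vecD eq_vecI index_zero_vec)
  have "0 < (cmod (w $ i))\<^sup>2" using i by simp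
  also have "\<dots> \<le> r" unfolding r_def using i by (intro member_le_sum) auto
  finally have r: "r \<noteq> 0" by simp
  have Aw: "(\<Sum>j\<in>{0..<n}. of_real (A $$ (i, j)) * w $ j) = z * w $ i" if "i < n" for i
  proof -
    have "(Ac *\<^sub>v w) $ i = z * w $ i" using w that by simp
    then show ?thesis using that A w by (simp add: Ac_def scalar_prod_def)
  qed
  define S where "S = (\<Sum>i\<in>{0..<n}. cnj (w $ i) * (\<Sum>j\<in>{0..<n}. of_real (A $$ (i, j)) * w $ j))"
  have "S = (\<Sum>i\<in>{0..<n}. cnj (w $ i) * (z * w $ i))"
    unfolding S_def by (intro sum.cong) (auto simp: Aw)
  also have "\<dots> = z * of_real r"
    unfolding r_def of_real_sum complex_norm_square by (simp add: sum_distrib_left mult_ac)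
  finally have "S = z * of_real r" .
  moreover have "cnj S = S" unfolding S_def by (rule real_symmetric_form_cnj[OF A sym])
  ultimately have "cnj z = z" using r by simp
  then have "Im z = 0" by (simp add: complex_eq_iff)
  then obtain e where "z = of_real e" by (metis complex_eq_iff Re_complex_of_real Im_complex_of_real)
  then have "poly (char_poly A) e = 0" using \<open>poly (char_poly Ac) z = 0\<close> cp by simp
  then show ?thesis
    using that eigenvalue_root_char_poly[OF A] A unfolding eigenvalue_def eigenvector_def by blast
qed

lemma real_symmetric_unit_eigenvector:
  fixes A :: "real mat"
  assumes A: "A \<in> carrier_mat n n" and sym: "A\<^sup>T = A" and n: "n > 0"
  obtains e :: real and v :: "real vec" where "v \<in> carrier_vec n" "v \<bullet> v = 1" "A *\<^sub>v v = e \<cdot>\<^sub>v v"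
proof -
  obtain e v where v: "v \<in> carrier_vec n" "v \<noteq> 0\<^sub>v n" "A *\<^sub>v v = e \<cdot>\<^sub>v v"
    using real_symmetric_eigenvector[OF A sym n] by blast
  have "v \<bullet> v > 0" using conjugate_square_greater_0_vec[OF v(1)] v(2) by simp
  then show ?thesis
    using that[of "(1 / sqrt (v \<bullet> v)) \<cdot>\<^sub>v v" e] v A
    by (simp add: mult_mat_vec smult_smult_assoc mult.commute)
qed

definition householder_mat :: "nat \<Rightarrow> real vec \<Rightarrow> real mat" where
  "householder_mat n w = mat n n (\<lambda>(i, j). (if i = j then 1 else 0) - 2 / (w \<bullet> w) * (w $ i * w $ j))"

lemma householder_mat_orthogonal:
  assumes w: "w \<in> carrier_vec n" "w \<noteq> 0\<^sub>v n"
  shows "orthogonal_mat n (householder_mat n w)"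
proof (rule orthogonal_matI)
  let ?H = "householder_mat n w" and ?c = "w \<bullet> w"
  have c: "?c > 0" using conjugate_square_greater_0_vec[OF w(1)] w(2) by simp
  have c_sum: "?c = (\<Sum>k\<in>{0..<n}. w $ k * w $ k)" using w by (simp add: scalar_prod_def)
  show H: "?H \<in> carrier_mat n n" by (simp add: householder_mat_def)
  have "?H\<^sup>T = ?H" by (rule eq_matI) (auto simp: householder_mat_def mult.commute)
  moreover have "?H * ?H = 1\<^sub>m n"
  proof (rule eq_matI)
    fix i j assume "i < dim_row (1\<^sub>m n)" "j < dim_col (1\<^sub>m n)"
    then have ij: "i < n" "j < n" by auto
    define a where "a = 2 / ?c"
    define K where "K = 4 / (?c * ?c) * (w $ i * w $ j)"
    have "(?H * ?H) $$ (i, j) = (\<Sum>k\<in>{0..<n}. ((if i = k then 1 else 0) - a * (w $ i * w $ k)) *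
         ((if k = j then 1 else 0) - a * (w $ k * w $ j)))"
      using ij by (simp add: householder_mat_def scalar_prod_def a_def)
    also have "\<dots> = (\<Sum>k\<in>{0..<n}. (if i = k then (if k = j then 1 else 0) else 0)
        - (if i = k then a * (w $ k * w $ j) else 0)
        - (if k = j then a * (w $ i * w $ k) else 0))
        + (\<Sum>k\<in>{0..<n}. K * (w $ k * w $ k))"
      unfolding sum.distrib[symmetric]
      by (rule sum.cong) (auto simp: algebra_simps a_def K_def)
    also have "\<dots> = (if i = j then 1 else 0) - a * (w $ i * w $ j) - a * (w $ i * w $ j) + K * ?c"
      using ij by (simp add: sum_subtractf c_sum sum_distrib_left)
    also have "\<dots> = (if i = j then 1 else 0)" using c by (simp add: field_simps a_def K_def)
    finally show "(?H * ?H) $$ (i, j) = 1\<^sub>m n $$ (i, j)" using ij by simp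
  qed (use H in auto)
  ultimately show "?H\<^sup>T * ?H = 1\<^sub>m n" by simp
qed

text \<open>The reflection swapping \<open>e\<^sub>0\<close> and \<open>v\<close> is the Householder matrix of \<open>v - e\<^sub>0\<close>.\<close>
lemma unit_vec_extends_to_orthogonal_mat:
  fixes v :: "real vec"
  assumes v: "v \<in> carrier_vec n" "v \<bullet> v = 1" and n: "n > 0"
  obtains H where "orthogonal_mat n H" "col H 0 = v"
proof (cases "v = unit_vec n 0")
  case True
  then show ?thesis using that[of "1\<^sub>m n"] n by (auto simp: orthogonal_mat_def)
next
  case False
  define w where "w = v - unit_vec n 0"
  have w_carrier: "w \<in> carrier_vec n" using v by (simp add: w_def)
  have "v = unit_vec n 0" if "w = 0\<^sub>v n"
  proof (rule eq_vecI)
    fix i assume "i < dim_vec (unit_vec n 0)"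
    then have "w $ i = 0" using that by simp
    then show "v $ i = unit_vec n 0 $ i" using v \<open>i < dim_vec (unit_vec n 0)\<close> by (simp add: w_def)
  qed (use v in simp)
  then have w: "w \<in> carrier_vec n" "w \<noteq> 0\<^sub>v n" using w_carrier False by auto
  have "w \<bullet> w = (\<Sum>k\<in>{0..<n}. v $ k * v $ k - (if k = 0 then 2 * v $ k else 0) + (if k = 0 then 1 else 0))"
    using v by (auto simp: w_def scalar_prod_def algebra_simps intro!: sum.cong)
  also have "\<dots> = v \<bullet> v - 2 * v $ 0 + 1"
    using v n by (simp add: sum.distrib sum_subtractf scalar_prod_def)
  finally have ww: "w \<bullet> w = 2 - 2 * v $ 0" using v by simp
  have "w \<bullet> w > 0" using conjugate_square_greater_0_vec[OF w(1)] w(2) by simp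
  then have scale: "2 / (w \<bullet> w) * w $ 0 = -1"
    using v n unfolding ww by (simp add: w_def field_simps)
  have "col (householder_mat n w) 0 = v"
  proof (rule eq_vecI)
    fix i assume "i < dim_vec v"
    then have i: "i < n" using v by simp
    have "col (householder_mat n w) 0 $ i = (if i = 0 then 1 else 0) - w $ i * (2 / (w \<bullet> w) * w $ 0)"
      using i n by (simp add: householder_mat_def mult_ac)
    also have "\<dots> = v $ i" using v i unfolding scale by (simp add: w_def)
    finally show "col (householder_mat n w) 0 $ i = v $ i" .
  qed (use v in \<open>simp add: householder_mat_def\<close>)
  then show ?thesis using that householder_mat_orthogonal[OF w] by blast
qed

definition border_mat :: "'a :: zero \<Rightarrow> 'a mat \<Rightarrow> 'a mat" where
  "border_mat a B = mat (Suc (dim_row B)) (Suc (dim_col B))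
     (\<lambda>(i, j). if i = 0 \<or> j = 0 then (if i = j then a else 0) else B $$ (i - 1, j - 1))"

lemma border_mat_carrier [simp]:
  "B \<in> carrier_mat n m \<Longrightarrow> border_mat a B \<in> carrier_mat (Suc n) (Suc m)"
  by (simp add: border_mat_def)

lemma transpose_border_mat: "(border_mat a B)\<^sup>T = border_mat a B\<^sup>T"
  by (rule eq_matI) (auto simp: border_mat_def)

lemma border_mat_mult:
  fixes B C :: "'a :: semiring_0 mat"
  assumes B: "B \<in> carrier_mat n m" and C: "C \<in> carrier_mat m k"
  shows "border_mat a B * border_mat b C = border_mat (a * b) (B * C)"
proof (rule eq_matI)
  fix i j assume "i < dim_row (border_mat (a * b) (B * C))" "j < dim_col (border_mat (a * b) (B * C))"
  then have ij: "i < Suc n" "j < Suc k" using B C by (auto simp: border_mat_def)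
  have "(border_mat a B * border_mat b C) $$ (i, j)
      = (\<Sum>l<Suc m. border_mat a B $$ (i, l) * border_mat b C $$ (l, j))"
    using B C ij by (simp add: scalar_prod_def border_mat_def atLeast0LessThan del: sum.lessThan_Suc)
  also have "\<dots> = border_mat a B $$ (i, 0) * border_mat b C $$ (0, j)
      + (\<Sum>l<m. border_mat a B $$ (i, Suc l) * border_mat b C $$ (Suc l, j))"
    by (rule sum.lessThan_Suc_shift)
  also have "\<dots> = border_mat (a * b) (B * C) $$ (i, j)"
    using B C ij by (cases i; cases j) (auto simp: border_mat_def scalar_prod_def atLeast0LessThan)
  finally show "(border_mat a B * border_mat b C) $$ (i, j) = border_mat (a * b) (B * C) $$ (i, j)" .
qed (use B C in \<open>auto simp: border_mat_def\<close>)

lemma border_mat_one: "border_mat 1 (1\<^sub>m n) = 1\<^sub>m (Suc n)"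
  by (rule eq_matI) (auto simp: border_mat_def)

lemma border_mat_diag: "border_mat e (mat_diag n f) = mat_diag (Suc n) (case_nat e f)"
  by (rule eq_matI) (auto simp: border_mat_def mat_diag_def split: nat.split)

lemma orthogonal_mat_border:
  assumes "orthogonal_mat n U"
  shows "orthogonal_mat (Suc n) (border_mat 1 U)"
  using orthogonal_matD[OF assms]
  by (intro orthogonal_matI) (simp_all add: transpose_border_mat border_mat_mult border_mat_one)

lemma border_mat_sandwich:
  fixes U :: "real mat"
  assumes U: "U \<in> carrier_mat n n"
  shows "border_mat 1 U * mat_diag (Suc n) (case_nat e f) * (border_mat 1 U)\<^sup>T
       = border_mat e (U * mat_diag n f * U\<^sup>T)"
proof -
  have "border_mat 1 U * border_mat e (mat_diag n f) = border_mat e (U * mat_diag n f)"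
    using border_mat_mult[OF U mat_diag_dim] by simp
  moreover have "U * mat_diag n f \<in> carrier_mat n n" using U by simp
  ultimately show ?thesis
    using U border_mat_mult[of "U * mat_diag n f" n n "U\<^sup>T" n]
    by (simp add: border_mat_diag[symmetric] transpose_border_mat)
qed

lemma border_mat_of_first_col:
  fixes A :: "real mat"
  assumes A: "A \<in> carrier_mat (Suc n) (Suc n)" and sym: "A\<^sup>T = A"
    and col0: "col A 0 = e \<cdot>\<^sub>v unit_vec (Suc n) 0"
  shows "A = border_mat e (mat n n (\<lambda>(i, j). A $$ (Suc i, Suc j)))"
proof (rule eq_matI)
  fix i j assume "i < dim_row (border_mat e (mat n n (\<lambda>(i, j). A $$ (Suc i, Suc j))))"
    "j < dim_col (border_mat e (mat n n (\<lambda>(i, j). A $$ (Suc i, Suc j))))"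
  then have ij: "i < Suc n" "j < Suc n" by (auto simp: border_mat_def)
  have A_i0: "A $$ (i, 0) = (if i = 0 then e else 0)" if "i < Suc n" for i
    using arg_cong[OF col0, of "\<lambda>v. v $ i"] A that by simp
  have "A $$ (0, j) = A $$ (j, 0)" using symmetric_mat_swap[OF A sym] ij by simp
  then show "A $$ (i, j) = border_mat e (mat n n (\<lambda>(i, j). A $$ (Suc i, Suc j))) $$ (i, j)"
    using ij A_i0 by (cases i; cases j) (auto simp: border_mat_def)
qed (use A in \<open>auto simp: border_mat_def\<close>)

lemma transpose_conj_mat_symmetric:
  fixes H A :: "'a :: comm_semiring_0 mat"
  assumes H: "H \<in> carrier_mat n n" and A: "A \<in> carrier_mat n n" and sym: "A\<^sup>T = A"
  shows "(H\<^sup>T * A * H)\<^sup>T = H\<^sup>T * A * H"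
proof -
  have HA: "H\<^sup>T * A \<in> carrier_mat n n" using H A by simp
  have "(H\<^sup>T * A * H)\<^sup>T = H\<^sup>T * (H\<^sup>T * A)\<^sup>T" using transpose_mult[OF HA H] H by simp
  also have "\<dots> = H\<^sup>T * A * H"
    using H A sym by (simp add: transpose_mult[of _ n n _ n] assoc_mult_mat[of _ n n _ n _ n])
  finally show ?thesis .
qed

lemma orthogonal_deflation:
  fixes A :: "real mat"
  assumes A: "A \<in> carrier_mat (Suc n) (Suc n)" and sym: "A\<^sup>T = A" and H: "orthogonal_mat (Suc n) H"
    and eig: "A *\<^sub>v col H 0 = e \<cdot>\<^sub>v col H 0"
  shows "H\<^sup>T * A * H = border_mat e (mat n n (\<lambda>(i, j). (H\<^sup>T * A * H) $$ (Suc i, Suc j)))"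
proof (rule border_mat_of_first_col)
  note H' = orthogonal_matD[OF H]
  show "H\<^sup>T * A * H \<in> carrier_mat (Suc n) (Suc n)" using H' A by simp
  show "(H\<^sup>T * A * H)\<^sup>T = H\<^sup>T * A * H" using transpose_conj_mat_symmetric[OF H'(1) A sym] .
  have "col (H\<^sup>T * A * H) 0 = (H\<^sup>T * A) *\<^sub>v col H 0"
    using H' A by (intro col_mult2[of _ "Suc n" "Suc n" _ "Suc n"]) auto
  also have "\<dots> = H\<^sup>T *\<^sub>v (A *\<^sub>v col H 0)"
    using H' A col_dim[of H 0] by (intro assoc_mult_mat_vec[of _ "Suc n" "Suc n" _ "Suc n"]) auto
  also have "\<dots> = e \<cdot>\<^sub>v col (H\<^sup>T * H) 0"
    using H' col_mult2[of "H\<^sup>T" "Suc n" "Suc n" H "Suc n" 0] col_dim[of H 0] by (simp add: eig mult_mat_vec)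
  finally show "col (H\<^sup>T * A * H) 0 = e \<cdot>\<^sub>v unit_vec (Suc n) 0" using H' by simp
qed

lemma orthogonal_mat_conj_cancel:
  assumes H: "orthogonal_mat n H" and A: "A \<in> carrier_mat n n"
  shows "H * (H\<^sup>T * A * H) * H\<^sup>T = A"
proof -
  note H' = orthogonal_matD[OF H]
  have "H * (H\<^sup>T * A * H) * H\<^sup>T = (H * H\<^sup>T) * A * (H * H\<^sup>T)"
    using H'(1) A by (simp add: assoc_mult_mat[of _ n n _ n _ n] mult_carrier_mat[of _ n n _ n])
  then show ?thesis using H' A by simp
qed

theorem real_symmetric_spectral:
  fixes A :: "real mat"
  assumes "A \<in> carrier_mat n n" "A\<^sup>T = A"
  shows "\<exists>U f. orthogonal_mat n U \<and> A = U * mat_diag n f * U\<^sup>T"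
  using assms
proof (induction n arbitrary: A)
  case 0
  then show ?case by (intro exI[of _ "1\<^sub>m 0"]) (auto simp: orthogonal_mat_def intro!: eq_matI)
next
  case (Suc n)
  have A: "A \<in> carrier_mat (Suc n) (Suc n)" and sym: "A\<^sup>T = A" using Suc.prems by auto
  obtain e and v :: "real vec" where v: "v \<in> carrier_vec (Suc n)" "v \<bullet> v = 1" "A *\<^sub>v v = e \<cdot>\<^sub>v v"
    using real_symmetric_unit_eigenvector[OF A sym] by blast
  obtain H where H: "orthogonal_mat (Suc n) H" and Hv: "col H 0 = v"
    using unit_vec_extends_to_orthogonal_mat[OF v(1,2)] by blast
  note H' = orthogonal_matD[OF H]
  define B where "B = mat n n (\<lambda>(i, j). (H\<^sup>T * A * H) $$ (Suc i, Suc j))"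
  have conj_border: "H\<^sup>T * A * H = border_mat e B"
    unfolding B_def using orthogonal_deflation[OF A sym H] Hv v(3) by simp
  have "H\<^sup>T * A * H \<in> carrier_mat (Suc n) (Suc n)" using H'(1) A by simp
  from symmetric_mat_swap[OF this transpose_conj_mat_symmetric[OF H'(1) A sym]]
  have "B\<^sup>T = B" by (intro eq_matI) (auto simp: B_def)
  then obtain U f where U: "orthogonal_mat n U" and B: "B = U * mat_diag n f * U\<^sup>T"
    using Suc.IH[of B] by (auto simp: B_def)
  define V where "V = H * border_mat 1 U"
  have V: "orthogonal_mat (Suc n) V"
    unfolding V_def by (rule orthogonal_mat_mult[OF H orthogonal_mat_border[OF U]])
  have "A = H * (H\<^sup>T * A * H) * H\<^sup>T" using orthogonal_mat_conj_cancel[OF H A] by simp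
  also have "\<dots> = H * (border_mat 1 U * mat_diag (Suc n) (case_nat e f) * (border_mat 1 U)\<^sup>T) * H\<^sup>T"
    unfolding conj_border B border_mat_sandwich[OF orthogonal_matD(1)[OF U]] ..
  also have "\<dots> = V * mat_diag (Suc n) (case_nat e f) * V\<^sup>T"
    using H'(1) orthogonal_matD(1)[OF U]
    by (simp add: V_def transpose_mult[of _ "Suc n" "Suc n" _ "Suc n"] assoc_mult_mat[of _ "Suc n" "Suc n" _ "Suc n" _ "Suc n"]
        mult_carrier_mat[of _ "Suc n" "Suc n" _ "Suc n"])
  finally show ?case using V by blast
qed

section \<open>Exponentials of positive semidefinite matrices\<close>

lemma sandwich_power:
  assumes U: "orthogonal_mat n U"
  shows "(U * mat_diag n f * U\<^sup>T) ^\<^sub>m k = U * mat_diag n (\<lambda>i. f i ^ k) * U\<^sup>T"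
proof (induction k)
  case 0
  then show ?case using orthogonal_matD[OF U] by simp
next
  case (Suc k)
  note U' = orthogonal_matD[OF U]
  have "(U * mat_diag n f * U\<^sup>T) ^\<^sub>m Suc k
      = U * mat_diag n (\<lambda>i. f i ^ k) * U\<^sup>T * (U * mat_diag n f * U\<^sup>T)"
    using Suc by simp
  also have "\<dots> = U * (mat_diag n (\<lambda>i. f i ^ k) * (U\<^sup>T * U) * mat_diag n f) * U\<^sup>T"
    using U'(1) by (simp add: assoc_mult_mat[of _ n n _ n _ n] mult_carrier_mat[of _ n n _ n])
  also have "\<dots> = U * mat_diag n (\<lambda>i. f i ^ Suc k) * U\<^sup>T"
    using U' by (simp add: right_mult_one_mat[OF mat_diag_dim] mult.commute)
  finally show ?case .
qed

lemma mat_exp_sandwich: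
  assumes U: "orthogonal_mat n U"
  shows "mat_exp (U * mat_diag n f * U\<^sup>T) = U * mat_diag n (\<lambda>i. exp (f i)) * U\<^sup>T"
proof (rule eq_matI)
  have Uc: "U \<in> carrier_mat n n" using orthogonal_matD[OF U] by simp
  fix i j assume "i < dim_row (U * mat_diag n (\<lambda>i. exp (f i)) * U\<^sup>T)"
    "j < dim_col (U * mat_diag n (\<lambda>i. exp (f i)) * U\<^sup>T)"
  then have ij: "i < n" "j < n" using Uc by auto
  have "(\<lambda>k. ((U * mat_diag n f * U\<^sup>T) ^\<^sub>m k) $$ (i, j) / fact k)
      = (\<lambda>k. \<Sum>l<n. U $$ (i, l) * (f l ^ k / fact k) * U $$ (j, l))"
    by (simp add: sandwich_power[OF U] sandwich_index[OF Uc ij] sum_divide_distrib)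
  moreover have "(\<lambda>k. \<Sum>l<n. U $$ (i, l) * (f l ^ k / fact k) * U $$ (j, l))
      sums (\<Sum>l<n. U $$ (i, l) * exp (f l) * U $$ (j, l))"
  proof (intro sums_sum sums_mult sums_mult2)
    show "(\<lambda>k. f l ^ k / fact k) sums exp (f l)" for l
      using exp_converges[of "f l"] by (simp add: divide_inverse mult.commute)
  qed
  ultimately have "mat_exp (U * mat_diag n f * U\<^sup>T) $$ (i, j)
      = (\<Sum>l<n. U $$ (i, l) * exp (f l) * U $$ (j, l))"
    using Uc ij by (simp add: mat_exp_def sums_unique[symmetric])
  then show "mat_exp (U * mat_diag n f * U\<^sup>T) $$ (i, j)
      = (U * mat_diag n (\<lambda>i. exp (f i)) * U\<^sup>T) $$ (i, j)"
    using sandwich_index[OF Uc ij] by simp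
qed (use orthogonal_matD[OF U] in \<open>simp_all add: mat_exp_def\<close>)

lemma sandwich_psd_imp_nonneg:
  assumes U: "orthogonal_mat n U" and l: "l < n"
    and psd: "\<forall>x \<in> carrier_vec n. 0 \<le> x \<bullet> ((U * mat_diag n f * U\<^sup>T) *\<^sub>v x)"
  shows "0 \<le> f l"
proof -
  have "U *\<^sub>v unit_vec n l \<in> carrier_vec n" using orthogonal_matD(1)[OF U] by simp
  then show ?thesis using psd sandwich_quadratic_form_unit_vec[OF U l, of f] by fastforce
qed

lemma sq_mult_le_sq:
  fixes c a :: real
  assumes "\<bar>c\<bar> \<le> 1"
  shows "(c * a)\<^sup>2 \<le> a\<^sup>2"
proof -
  have "c\<^sup>2 \<le> 1" using abs_le_square_iff[of c 1] assms by simp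
  then have "c\<^sup>2 * a\<^sup>2 \<le> 1 * a\<^sup>2" by (intro mult_right_mono) auto
  then show ?thesis by (simp add: power_mult_distrib)
qed

lemma sandwich_contraction:
  assumes U: "orthogonal_mat n U" and x: "x \<in> carrier_vec n"
    and g: "\<And>l. l < n \<Longrightarrow> \<bar>g l\<bar> \<le> 1"
  shows "((U * mat_diag n g * U\<^sup>T) *\<^sub>v x) \<bullet> ((U * mat_diag n g * U\<^sup>T) *\<^sub>v x) \<le> x \<bullet> x"
  unfolding sandwich_sq_norm[OF U x] orthogonal_coords_sq_norm[OF U x]
  by (intro sum_mono sq_mult_le_sq g) simp

lemma sandwich_contraction_eq:
  assumes U: "orthogonal_mat n U" and x: "x \<in> carrier_vec n"
    and g: "\<And>l. l < n \<Longrightarrow> \<bar>g l\<bar> \<le> 1"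
    and eq: "((U * mat_diag n g * U\<^sup>T) *\<^sub>v x) \<bullet> ((U * mat_diag n g * U\<^sup>T) *\<^sub>v x) = x \<bullet> x"
    and l: "l < n"
  shows "\<bar>g l\<bar> = 1 \<or> (U\<^sup>T *\<^sub>v x) $ l = 0"
proof -
  let ?y = "U\<^sup>T *\<^sub>v x"
  have le: "(g l * a)\<^sup>2 \<le> a\<^sup>2" if "l < n" for l a
    using sq_mult_le_sq[OF g[OF that]] .
  have "(\<Sum>l<n. (?y $ l)\<^sup>2 - (g l * ?y $ l)\<^sup>2) = 0"
    using eq unfolding sandwich_sq_norm[OF U x] orthogonal_coords_sq_norm[OF U x]
    by (simp add: sum_subtractf)
  then have "(?y $ l)\<^sup>2 - (g l * ?y $ l)\<^sup>2 = 0"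
    using le l by (subst (asm) sum_nonneg_eq_0_iff) auto
  then have "(?y $ l)\<^sup>2 * (1 - (g l)\<^sup>2) = 0" by (simp add: algebra_simps power_mult_distrib)
  then show ?thesis by (auto simp: abs_square_eq_1)
qed

lemma neg_smult_sandwich:
  fixes U :: "real mat"
  assumes U: "U \<in> carrier_mat n n"
  shows "- (s \<cdot>\<^sub>m (U * mat_diag n f * U\<^sup>T)) = U * mat_diag n (\<lambda>l. - s * f l) * U\<^sup>T"
proof (rule eq_matI)
  fix i j assume "i < dim_row (U * mat_diag n (\<lambda>l. - s * f l) * U\<^sup>T)"
    "j < dim_col (U * mat_diag n (\<lambda>l. - s * f l) * U\<^sup>T)"
  then have ij: "i < n" "j < n" using U by auto
  have "(- (s \<cdot>\<^sub>m (U * mat_diag n f * U\<^sup>T))) $$ (i, j) = (- s) * (U * mat_diag n f * U\<^sup>T) $$ (i, j)"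
    using U ij by simp
  also have "\<dots> = (\<Sum>k<n. - s * (U $$ (i, k) * f k * U $$ (j, k)))"
    unfolding sandwich_index[OF U ij] by (rule sum_distrib_left)
  also have "\<dots> = (U * mat_diag n (\<lambda>l. - s * f l) * U\<^sup>T) $$ (i, j)"
    unfolding sandwich_index[OF U ij] by (simp add: mult_ac)
  finally show "(- (s \<cdot>\<^sub>m (U * mat_diag n f * U\<^sup>T))) $$ (i, j)
      = (U * mat_diag n (\<lambda>l. - s * f l) * U\<^sup>T) $$ (i, j)" .
qed (use U in auto)

text \<open>Diagonalising \<open>L = U diag(\<lambda>) U\<^sup>T\<close> with \<open>\<lambda> \<ge> 0\<close>, \<open>e\<^bsup>-sL\<^esup>\<close> scales the
  \<open>l\<close>-th coordinate by \<open>e\<^bsup>-s \<lambda>\<^sub>l\<^esup> \<in> (0, 1]\<close>, which is \<open>1\<close> only when \<open>\<lambda>\<^sub>l = 0\<close>.\<close>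
lemma mat_exp_neg_psd:
  fixes L :: "real mat"
  assumes L: "L \<in> carrier_mat n n" and sym: "L\<^sup>T = L"
    and psd: "\<forall>x \<in> carrier_vec n. 0 \<le> x \<bullet> (L *\<^sub>v x)" and s: "s > 0"
  defines "E \<equiv> mat_exp (- (s \<cdot>\<^sub>m L))"
  shows "E \<in> carrier_mat n n"
    and "\<And>x. x \<in> carrier_vec n \<Longrightarrow> (E *\<^sub>v x) \<bullet> (E *\<^sub>v x) \<le> x \<bullet> x"
    and "\<And>x. x \<in> carrier_vec n \<Longrightarrow> (E *\<^sub>v x) \<bullet> (E *\<^sub>v x) = x \<bullet> x \<Longrightarrow> L *\<^sub>v x = 0\<^sub>v n \<and> E *\<^sub>v x = x"
proof -
  obtain U f where U: "orthogonal_mat n U" and L_eq: "L = U * mat_diag n f * U\<^sup>T"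
    using real_symmetric_spectral[OF L sym] by blast
  have Uc: "U \<in> carrier_mat n n" using orthogonal_matD[OF U] by simp
  define g where "g l = exp (- s * f l)" for l
  have E_eq: "E = U * mat_diag n g * U\<^sup>T"
    unfolding E_def L_eq neg_smult_sandwich[OF Uc] mat_exp_sandwich[OF U] g_def ..
  have f: "0 \<le> f l" if "l < n" for l
    using sandwich_psd_imp_nonneg[OF U that] psd unfolding L_eq .
  have g: "\<bar>g l\<bar> \<le> 1" if "l < n" for l using f[OF that] s by (simp add: g_def)
  show "E \<in> carrier_mat n n" unfolding E_eq using Uc by simp
  show "(E *\<^sub>v x) \<bullet> (E *\<^sub>v x) \<le> x \<bullet> x" if x: "x \<in> carrier_vec n" for x
    unfolding E_eq by (rule sandwich_contraction[OF U x g])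
  show "L *\<^sub>v x = 0\<^sub>v n \<and> E *\<^sub>v x = x"
    if x: "x \<in> carrier_vec n" and eq: "(E *\<^sub>v x) \<bullet> (E *\<^sub>v x) = x \<bullet> x" for x
  proof -
    have "\<bar>g l\<bar> = 1 \<or> (U\<^sup>T *\<^sub>v x) $ l = 0" if "l < n" for l
      using sandwich_contraction_eq[of n U x g l, OF U x g _ that] eq unfolding E_eq by blast
    then have coord: "f l = 0 \<or> (U\<^sup>T *\<^sub>v x) $ l = 0" if "l < n" for l
      using that s by (auto simp: g_def)
    have "L *\<^sub>v x = U *\<^sub>v 0\<^sub>v n"
      unfolding L_eq sandwich_mult_vec[OF Uc x] using coord by (intro arg_cong[of _ _ "(*\<^sub>v) U"] eq_vecI) auto
    moreover have "E *\<^sub>v x = U *\<^sub>v (U\<^sup>T *\<^sub>v x)"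
      unfolding E_eq sandwich_mult_vec[OF Uc x] using coord Uc
      by (intro arg_cong[of _ _ "(*\<^sub>v) U"] eq_vecI) (auto simp: g_def)
    moreover have "U *\<^sub>v 0\<^sub>v n = 0\<^sub>v n" using Uc by (intro eq_vecI) auto
    ultimately show ?thesis using orthogonal_mat_mult_vec_cancel(1)[OF U x] by simp
  qed
qed

section \<open>The matrix-valued Laplacian\<close>

lemma sum_nat_blocks:
  fixes f :: "nat \<Rightarrow> 'b :: comm_monoid_add"
  shows "(\<Sum>p<d * n. f p) = (\<Sum>i<n. \<Sum>a<d. f (i * d + a))"
proof (induction n)
  case (Suc n)
  have blocks: "{..<d * Suc n} = {..<d * n} \<union> {d * n..<d * n + d}" by auto
  have "(\<Sum>p<d * Suc n. f p) = (\<Sum>p<d * n. f p) + (\<Sum>p\<in>{d * n..<d * n + d}. f p)"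
    unfolding blocks by (rule sum.union_disjoint) auto
  also have "(\<Sum>p\<in>{d * n..<d * n + d}. f p) = (\<Sum>a<d. f (n * d + a))"
    using sum.shift_bounds_nat_ivl[of f 0 "d * n" d] by (simp add: atLeast0LessThan add.commute mult.commute)
  finally show ?case using Suc by simp
qed simp

lemma block_index_less:
  assumes "i < n" "a < (d :: nat)"
  shows "i * d + a < d * n"
proof -
  have "(i + 1) * d \<le> n * d" using assms(1) by (intro mult_right_mono) auto
  then show ?thesis using assms(2) by (simp add: algebra_simps)
qed

lemma mw_laplacian_dim [simp]:
  "dim_row (mw_laplacian d n Wt) = d * n" "dim_col (mw_laplacian d n Wt) = d * n"
  by (simp_all add: mw_laplacian_def)

lemma mw_laplacian_carrier [simp]: "mw_laplacian d n Wt \<in> carrier_mat (d * n) (d * n)"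
  by (simp add: carrier_matI)

lemma mw_laplacian_block_entry:
  assumes "i < n" "j < n" "a < d" "b < d"
  shows "mw_laplacian d n Wt $$ (i * d + a, j * d + b) =
    (if i = j then (\<Sum>l<n. abs_w d (Wt i l) $$ (a, b)) else 0) - Wt i j $$ (a, b)"
  using assms block_index_less[of i n a d] block_index_less[of j n b d]
  by (simp add: mw_laplacian_def)

lemma mw_laplacian_symmetric:
  assumes W_carrier: "\<And>i j. i < n \<Longrightarrow> j < n \<Longrightarrow> Wt i j \<in> carrier_mat d d"
    and W_sym_mat: "\<And>i j. i < n \<Longrightarrow> j < n \<Longrightarrow> (Wt i j)\<^sup>T = Wt i j"
    and W_sym: "\<And>i j. i < n \<Longrightarrow> j < n \<Longrightarrow> Wt i j = Wt j i"
  shows "(mw_laplacian d n Wt)\<^sup>T = mw_laplacian d n Wt"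
proof (rule eq_matI)
  fix p q assume "p < dim_row (mw_laplacian d n Wt)" "q < dim_col (mw_laplacian d n Wt)"
  then have pq: "p < d * n" "q < d * n" by (auto simp: mw_laplacian_def)
  then have d: "d > 0" by (cases d) auto
  have i: "p div d < n" and j: "q div d < n" using pq by (auto simp: less_mult_imp_div_less mult.commute)
  have a: "p mod d < d" and b: "q mod d < d" using d by auto
  have "Wt (q div d) (p div d) $$ (q mod d, p mod d) = Wt (p div d) (q div d) $$ (p mod d, q mod d)"
    using W_sym[OF j i] symmetric_mat_swap[OF W_carrier[OF i j] W_sym_mat[OF i j] a b] by simp
  moreover have "abs_w d (Wt (p div d) l) $$ (q mod d, p mod d) = abs_w d (Wt (p div d) l) $$ (p mod d, q mod d)"
    if "l < n" for l
    using symmetric_mat_swap[OF W_carrier[OF i that] W_sym_mat[OF i that] a b] W_carrier[OF i that] a b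
    by (auto simp: abs_w_def)
  ultimately show "(mw_laplacian d n Wt)\<^sup>T $$ (p, q) = mw_laplacian d n Wt $$ (p, q)"
    using pq by (auto simp: mw_laplacian_def intro!: sum.cong)
qed (auto simp: mw_laplacian_def)

definition bilinear_form :: "nat \<Rightarrow> real mat \<Rightarrow> (nat \<Rightarrow> real) \<Rightarrow> (nat \<Rightarrow> real) \<Rightarrow> real" where
  "bilinear_form d M y z = (\<Sum>a<d. \<Sum>b<d. y a * M $$ (a, b) * z b)"

lemma bilinear_form_psd:
  assumes "psd_mat d M"
  shows "0 \<le> bilinear_form d M y y"
proof -
  have M: "M \<in> carrier_mat d d" using assms psd_mat_def by auto
  have "0 \<le> vec d y \<bullet> (M *\<^sub>v vec d y)" using assms unfolding psd_mat_def by auto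
  also have "\<dots> = bilinear_form d M y y"
    unfolding bilinear_form_def using M
    by (simp add: scalar_prod_def sum_distrib_left atLeast0LessThan mult_ac)
  finally show ?thesis .
qed

lemma bilinear_form_diff_self:
  "bilinear_form d M (\<lambda>a. y a - z a) (\<lambda>a. y a - z a)
     = bilinear_form d M y y - bilinear_form d M y z - bilinear_form d M z y + bilinear_form d M z z"
  unfolding bilinear_form_def by (simp add: sum_subtractf sum.distrib algebra_simps)

lemma bilinear_form_add_self:
  "bilinear_form d M (\<lambda>a. y a + z a) (\<lambda>a. y a + z a)
     = bilinear_form d M y y + bilinear_form d M y z + bilinear_form d M z y + bilinear_form d M z z"
  unfolding bilinear_form_def by (simp add: sum.distrib algebra_simps)

lemma bilinear_form_uminus:
  "M \<in> carrier_mat d d \<Longrightarrow> bilinear_form d (- M) y z = - bilinear_form d M y z"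
  unfolding bilinear_form_def by (simp add: sum_negf)

lemma mw_laplacian_mult_vec_block:
  assumes x: "x \<in> carrier_vec (d * n)" and i: "i < n" and a: "a < d"
  shows "(mw_laplacian d n Wt *\<^sub>v x) $ (i * d + a)
     = (\<Sum>j<n. \<Sum>b<d. abs_w d (Wt i j) $$ (a, b) * x $ (i * d + b) - Wt i j $$ (a, b) * x $ (j * d + b))"
proof -
  let ?L = "mw_laplacian d n Wt"
  define S where "S b = (\<Sum>l<n. abs_w d (Wt i l) $$ (a, b))" for b
  have diag: "(\<Sum>j<n. \<Sum>b<d. (if i = j then S b else 0) * x $ (j * d + b)) = (\<Sum>b<d. S b * x $ (i * d + b))"
    using i by (subst sum.swap) (simp add: if_distrib[of "\<lambda>c. c * _"] cong: if_cong)
  have "(?L *\<^sub>v x) $ (i * d + a) = (\<Sum>q<d * n. ?L $$ (i * d + a, q) * x $ q)"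
    using x block_index_less[OF i a] by (simp add: scalar_prod_def atLeast0LessThan)
  also have "\<dots> = (\<Sum>j<n. \<Sum>b<d. (if i = j then S b else 0) * x $ (j * d + b)
      - Wt i j $$ (a, b) * x $ (j * d + b))"
    unfolding sum_nat_blocks S_def using i a by (simp add: mw_laplacian_block_entry left_diff_distrib)
  also have "\<dots> = (\<Sum>b<d. S b * x $ (i * d + b)) - (\<Sum>j<n. \<Sum>b<d. Wt i j $$ (a, b) * x $ (j * d + b))"
    by (simp add: sum_subtractf diag)
  also have "\<dots> = (\<Sum>j<n. \<Sum>b<d. abs_w d (Wt i j) $$ (a, b) * x $ (i * d + b)
      - Wt i j $$ (a, b) * x $ (j * d + b))"
    unfolding S_def sum_distrib_right by (simp add: sum_subtractf sum.swap[of _ "{..<d}" "{..<n}"])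
  finally show ?thesis .
qed

lemma mw_laplacian_quadratic_form:
  fixes x :: "real vec"
  assumes x: "x \<in> carrier_vec (d * n)"
  defines "X \<equiv> \<lambda>i a. x $ (i * d + a)"
  shows "x \<bullet> (mw_laplacian d n Wt *\<^sub>v x) = (\<Sum>i<n. \<Sum>j<n.
      bilinear_form d (abs_w d (Wt i j)) (X i) (X i) - bilinear_form d (Wt i j) (X i) (X j))"
proof -
  have "x \<bullet> (mw_laplacian d n Wt *\<^sub>v x) = (\<Sum>p<d * n. x $ p * (mw_laplacian d n Wt *\<^sub>v x) $ p)"
    using x by (simp add: scalar_prod_def atLeast0LessThan)
  also have "\<dots> = (\<Sum>i<n. \<Sum>a<d. X i a * (mw_laplacian d n Wt *\<^sub>v x) $ (i * d + a))"
    unfolding sum_nat_blocks X_def ..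
  also have "\<dots> = (\<Sum>i<n. \<Sum>a<d. \<Sum>j<n. \<Sum>b<d. X i a * abs_w d (Wt i j) $$ (a, b) * X i b
      - X i a * Wt i j $$ (a, b) * X j b)"
  proof (intro sum.cong refl)
    fix i a assume "i \<in> {..<n}" "a \<in> {..<d}"
    then have "(mw_laplacian d n Wt *\<^sub>v x) $ (i * d + a) = (\<Sum>j<n. \<Sum>b<d.
        abs_w d (Wt i j) $$ (a, b) * X i b - Wt i j $$ (a, b) * X j b)"
      unfolding X_def by (intro mw_laplacian_mult_vec_block[OF x]) auto
    then show "X i a * (mw_laplacian d n Wt *\<^sub>v x) $ (i * d + a) = (\<Sum>j<n. \<Sum>b<d.
        X i a * abs_w d (Wt i j) $$ (a, b) * X i b - X i a * Wt i j $$ (a, b) * X j b)"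
      by (simp add: sum_distrib_left algebra_simps)
  qed
  also have "\<dots> = (\<Sum>i<n. \<Sum>j<n. bilinear_form d (abs_w d (Wt i j)) (X i) (X i)
      - bilinear_form d (Wt i j) (X i) (X j))"
    unfolding bilinear_form_def by (subst sum.swap) (simp add: sum_subtractf)
  finally show ?thesis .
qed

text \<open>The pair \<open>{i, j}\<close> contributes \<open>(X\<^sub>i - X\<^sub>j)\<^sup>T A\<^sub>i\<^sub>j (X\<^sub>i - X\<^sub>j)\<close> if
  \<open>A\<^sub>i\<^sub>j \<succeq> 0\<close> and \<open>(X\<^sub>i + X\<^sub>j)\<^sup>T (-A\<^sub>i\<^sub>j) (X\<^sub>i + X\<^sub>j)\<close> if \<open>A\<^sub>i\<^sub>j \<preceq> 0\<close>.\<close>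
lemma mw_laplacian_psd:
  assumes x: "x \<in> carrier_vec (d * n)"
    and W_carrier: "\<And>i j. i < n \<Longrightarrow> j < n \<Longrightarrow> Wt i j \<in> carrier_mat d d"
    and W_sym: "\<And>i j. i < n \<Longrightarrow> j < n \<Longrightarrow> Wt i j = Wt j i"
    and W_sign: "\<And>i j. i < n \<Longrightarrow> j < n \<Longrightarrow> psd_mat d (Wt i j) \<or> nsd_mat d (Wt i j)"
  shows "0 \<le> x \<bullet> (mw_laplacian d n Wt *\<^sub>v x)"
proof -
  define X where "X i a = x $ (i * d + a)" for i a
  define F where "F i j = bilinear_form d (abs_w d (Wt i j)) (X i) (X i)
    - bilinear_form d (Wt i j) (X i) (X j)" for i j
  have pair: "0 \<le> F i j + F j i" if ij: "i < n" "j < n" for i j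
  proof -
    define M where "M = Wt i j"
    have M: "M \<in> carrier_mat d d" using W_carrier[OF ij] by (simp add: M_def)
    have "F i j + F j i = bilinear_form d (abs_w d M) (X i) (X i) + bilinear_form d (abs_w d M) (X j) (X j)
        - bilinear_form d M (X i) (X j) - bilinear_form d M (X j) (X i)"
      unfolding F_def M_def using W_sym[OF ij] by simp
    show ?thesis
    proof (cases "psd_mat d M")
      case True
      then show ?thesis using bilinear_form_psd[OF True, of "\<lambda>a. X i a - X j a"]
        unfolding \<open>F i j + F j i = _\<close> bilinear_form_diff_self by (simp add: abs_w_def)
    next
      case False
      then have "psd_mat d (- M)" using W_sign[OF ij] by (simp add: M_def nsd_mat_def)
      then show ?thesis using False bilinear_form_psd[of d "- M" "\<lambda>a. X i a + X j a"]
        unfolding \<open>F i j + F j i = _\<close> bilinear_form_add_self bilinear_form_uminus[OF M]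
        by (simp add: abs_w_def bilinear_form_uminus[OF M])
    qed
  qed
  have "2 * (\<Sum>i<n. \<Sum>j<n. F i j) = (\<Sum>i<n. \<Sum>j<n. F i j) + (\<Sum>j<n. \<Sum>i<n. F i j)"
    by (subst (2) sum.swap) simp
  also have "\<dots> = (\<Sum>i<n. \<Sum>j<n. F i j + F j i)" by (simp add: sum.distrib)
  also have "\<dots> \<ge> 0" using pair by (intro sum_nonneg) auto
  finally show ?thesis
    unfolding mw_laplacian_quadratic_form[OF x] F_def X_def by simp
qed

section \<open>Transition matrices and the averaged Laplacian\<close>

lemma trans_mat_contraction:
  fixes Lk :: "nat \<Rightarrow> real mat" and tk :: "nat \<Rightarrow> real"
  assumes L_carrier: "\<And>k. Lk k \<in> carrier_mat N N" and L_sym: "\<And>k. (Lk k)\<^sup>T = Lk k"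
    and L_psd: "\<And>k. \<forall>x \<in> carrier_vec N. 0 \<le> x \<bullet> (Lk k *\<^sub>v x)"
    and t_mono: "\<And>k. tk k < tk (Suc k)"
  shows "trans_mat N Lk tk k0 j \<in> carrier_mat N N \<and>
    (\<forall>x \<in> carrier_vec N. (trans_mat N Lk tk k0 j *\<^sub>v x) \<bullet> (trans_mat N Lk tk k0 j *\<^sub>v x) \<le> x \<bullet> x \<and>
      ((trans_mat N Lk tk k0 j *\<^sub>v x) \<bullet> (trans_mat N Lk tk k0 j *\<^sub>v x) = x \<bullet> x \<longrightarrow>
        trans_mat N Lk tk k0 j *\<^sub>v x = x \<and> (\<forall>k. k0 \<le> k \<longrightarrow> k < k0 + j \<longrightarrow> Lk k *\<^sub>v x = 0\<^sub>v N)))"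
proof (induction j)
  case (Suc j)
  define E where "E = mat_exp (- ((tk (Suc (k0 + j)) - tk (k0 + j)) \<cdot>\<^sub>m Lk (k0 + j)))"
  define Phi where "Phi = trans_mat N Lk tk k0 j"
  have s: "tk (Suc (k0 + j)) - tk (k0 + j) > 0" using t_mono[of "k0 + j"] by simp
  note E = mat_exp_neg_psd[OF L_carrier[of "k0 + j"] L_sym[of "k0 + j"] L_psd[of "k0 + j"] s, folded E_def]
  have Phi: "Phi \<in> carrier_mat N N" using Suc.IH by (simp add: Phi_def)
  have step: "trans_mat N Lk tk k0 (Suc j) = E * Phi" by (simp add: E_def Phi_def)
  have "(E * Phi) *\<^sub>v x = E *\<^sub>v (Phi *\<^sub>v x)" if "x \<in> carrier_vec N" for x
    using E(1) Phi that by simp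
  moreover have "(E *\<^sub>v (Phi *\<^sub>v x)) \<bullet> (E *\<^sub>v (Phi *\<^sub>v x)) \<le> x \<bullet> x \<and>
      ((E *\<^sub>v (Phi *\<^sub>v x)) \<bullet> (E *\<^sub>v (Phi *\<^sub>v x)) = x \<bullet> x \<longrightarrow>
        E *\<^sub>v (Phi *\<^sub>v x) = x \<and> (\<forall>k. k0 \<le> k \<longrightarrow> k < k0 + Suc j \<longrightarrow> Lk k *\<^sub>v x = 0\<^sub>v N))"
    if x: "x \<in> carrier_vec N" for x
  proof -
    have y: "Phi *\<^sub>v x \<in> carrier_vec N" using Phi x by simp
    have IH: "(Phi *\<^sub>v x) \<bullet> (Phi *\<^sub>v x) \<le> x \<bullet> x"
      "(Phi *\<^sub>v x) \<bullet> (Phi *\<^sub>v x) = x \<bullet> x \<Longrightarrow>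
        Phi *\<^sub>v x = x \<and> (\<forall>k. k0 \<le> k \<longrightarrow> k < k0 + j \<longrightarrow> Lk k *\<^sub>v x = 0\<^sub>v N)"
      using Suc.IH x unfolding Phi_def by blast+
    have E_le: "(E *\<^sub>v (Phi *\<^sub>v x)) \<bullet> (E *\<^sub>v (Phi *\<^sub>v x)) \<le> (Phi *\<^sub>v x) \<bullet> (Phi *\<^sub>v x)"
      by (rule E(2)[OF y])
    show ?thesis
    proof (intro conjI impI)
      show "(E *\<^sub>v (Phi *\<^sub>v x)) \<bullet> (E *\<^sub>v (Phi *\<^sub>v x)) \<le> x \<bullet> x" using E_le IH(1) by linarith
      assume eq: "(E *\<^sub>v (Phi *\<^sub>v x)) \<bullet> (E *\<^sub>v (Phi *\<^sub>v x)) = x \<bullet> x"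
      then have "(Phi *\<^sub>v x) \<bullet> (Phi *\<^sub>v x) = x \<bullet> x" using E_le IH(1) by linarith
      then have "Phi *\<^sub>v x = x" and "\<forall>k. k0 \<le> k \<longrightarrow> k < k0 + j \<longrightarrow> Lk k *\<^sub>v x = 0\<^sub>v N"
        using IH(2) by blast+
      moreover have "Lk (k0 + j) *\<^sub>v x = 0\<^sub>v N \<and> E *\<^sub>v x = x"
        using E(3)[OF x] eq \<open>Phi *\<^sub>v x = x\<close> by simp
      ultimately show "E *\<^sub>v (Phi *\<^sub>v x) = x" "\<forall>k. k0 \<le> k \<longrightarrow> k < k0 + Suc j \<longrightarrow> Lk k *\<^sub>v x = 0\<^sub>v N"
        by (auto simp: less_Suc_eq)
    qed
  qed
  ultimately show ?case unfolding step using E(1) Phi by simp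
qed simp

lemma has_integral_piecewise_constant:
  fixes tk :: "nat \<Rightarrow> real" and g :: "real \<Rightarrow> real"
  assumes t_mono: "\<And>k. tk k \<le> tk (Suc k)"
    and g_const: "\<And>k t. tk k \<le> t \<Longrightarrow> t < tk (Suc k) \<Longrightarrow> g t = c k"
  shows "(g has_integral (\<Sum>k\<in>{k0..<k0 + j}. (tk (Suc k) - tk k) * c k)) {tk k0..tk (k0 + j)}"
proof (induction j)
  case 0
  then show ?case using has_integral_refl(2)[of g "tk k0"] by simp
next
  case (Suc j)
  let ?a = "tk (k0 + j)" and ?b = "tk (Suc (k0 + j))"
  have piece: "(g has_integral ((?b - ?a) * c (k0 + j))) {?a..?b}"
  proof (rule has_integral_spike_finite[of "{?b}" _ g "\<lambda>t. c (k0 + j)"])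
    show "((\<lambda>t. c (k0 + j)) has_integral ((?b - ?a) * c (k0 + j))) {?a..?b}"
      using has_integral_const_real[of "c (k0 + j)" ?a ?b] t_mono by simp
  qed (auto intro: g_const)
  have "tk k0 \<le> ?a" by (rule lift_Suc_mono_le[of tk]) (use t_mono in auto)
  from has_integral_combine[OF this t_mono Suc.IH piece] show ?case by simp
qed

lemma integral_piecewise_constant:
  fixes tk :: "nat \<Rightarrow> real" and g :: "real \<Rightarrow> real"
  assumes t_mono: "\<And>k. tk k \<le> tk (Suc k)"
    and g_const: "\<And>k t. tk k \<le> t \<Longrightarrow> t < tk (Suc k) \<Longrightarrow> g t = c k"
    and "k' \<le> k''"
  shows "integral {tk k'..<tk k''} g = (\<Sum>k\<in>{k'..<k''}. (tk (Suc k) - tk k) * c k)"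
proof -
  have "(g has_integral (\<Sum>k\<in>{k'..<k''}. (tk (Suc k) - tk k) * c k)) {tk k'..tk k''}"
    using has_integral_piecewise_constant[of tk g c k' "k'' - k'", OF t_mono g_const] \<open>k' \<le> k''\<close> by simp
  moreover have "(g has_integral I) {tk k'..tk k''} \<longleftrightarrow> (g has_integral I) {tk k'..<tk k''}" for I
    by (rule has_integral_spike_set_eq; rule negligible_subset[of "{tk k''}"]) auto
  ultimately have "(g has_integral (\<Sum>k\<in>{k'..<k''}. (tk (Suc k) - tk k) * c k)) {tk k'..<tk k''}"
    by blast
  then show ?thesis by (rule integral_unique)
qed

lemma weighted_sum_mat_mult_vec_zero:
  fixes L :: "nat \<Rightarrow> real mat"
  assumes L: "\<And>k. k \<in> K \<Longrightarrow> L k \<in> carrier_mat N N" and x: "x \<in> carrier_vec N"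
    and Lx: "\<And>k. k \<in> K \<Longrightarrow> L k *\<^sub>v x = 0\<^sub>v N"
  shows "mat N N (\<lambda>(p, q). \<Sum>k\<in>K. w k * L k $$ (p, q)) *\<^sub>v x = 0\<^sub>v N"
proof (rule eq_vecI)
  fix p assume "p < dim_vec (0\<^sub>v N :: real vec)"
  then have p: "p < N" by simp
  have row: "(\<Sum>q\<in>{0..<N}. L k $$ (p, q) * x $ q) = 0" if "k \<in> K" for k
    using arg_cong[OF Lx[OF that], of "\<lambda>v. v $ p"] L[OF that] x p by (simp add: scalar_prod_def)
  have "(mat N N (\<lambda>(p, q). \<Sum>k\<in>K. w k * L k $$ (p, q)) *\<^sub>v x) $ p
      = (\<Sum>k\<in>K. w k * (\<Sum>q\<in>{0..<N}. L k $$ (p, q) * x $ q))"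
    using x p by (simp add: scalar_prod_def sum_distrib_left sum_distrib_right sum.swap[of _ K] mult_ac)
  also have "\<dots> = 0" using row by simp
  finally show "(mat N N (\<lambda>(p, q). \<Sum>k\<in>K. w k * L k $$ (p, q)) *\<^sub>v x) $ p = 0\<^sub>v N $ p" using p by simp
qed simp

lemma average_piecewise_constant_mult_vec_zero:
  fixes M :: "real \<Rightarrow> real mat" and Mk :: "nat \<Rightarrow> real mat" and tk :: "nat \<Rightarrow> real"
  assumes t_mono: "\<And>k. tk k \<le> tk (Suc k)"
    and M_const: "\<And>k t. tk k \<le> t \<Longrightarrow> t < tk (Suc k) \<Longrightarrow> M t = Mk k"
    and Mk: "\<And>k. Mk k \<in> carrier_mat N N" and "k' \<le> k''" and x: "x \<in> carrier_vec N"
    and Mk_x: "\<And>k. k' \<le> k \<Longrightarrow> k < k'' \<Longrightarrow> Mk k *\<^sub>v x = 0\<^sub>v N"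
  shows "mat N N (\<lambda>(p, q). integral {tk k'..<tk k''} (\<lambda>t. M t $$ (p, q)) / (tk k'' - tk k')) *\<^sub>v x = 0\<^sub>v N"
proof -
  have M_entry: "M t $$ (p, q) = Mk k $$ (p, q)" if "tk k \<le> t" "t < tk (Suc k)" for k t p q
    using M_const[OF that] by simp
  define w where "w k = (tk (Suc k) - tk k) / (tk k'' - tk k')" for k
  have average: "integral {tk k'..<tk k''} (\<lambda>t. M t $$ (p, q)) / (tk k'' - tk k')
      = (\<Sum>k\<in>{k'..<k''}. w k * Mk k $$ (p, q))" for p q
    using integral_piecewise_constant[where tk = tk and g = "\<lambda>t. M t $$ (p, q)" and c = "\<lambda>k. Mk k $$ (p, q)",
        OF t_mono M_entry \<open>k' \<le> k''\<close>]
    by (simp add: sum_divide_distrib w_def)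
  show ?thesis
    unfolding average by (rule weighted_sum_mat_mult_vec_zero[where L = Mk]) (use Mk x Mk_x in auto)
qed

section \<open>Eigenvalues of the Gram matrix\<close>

lemma card_orthonormal_le_kernel_dim:
  fixes A :: "real mat" and B :: "real vec set"
  assumes A: "A \<in> carrier_mat N N" and B: "B \<subseteq> mat_kernel A" and B_carrier: "B \<subseteq> carrier_vec N"
    and orth: "\<And>u v. u \<in> B \<Longrightarrow> v \<in> B \<Longrightarrow> u \<bullet> v = (if u = v then 1 else 0)"
  shows "card B \<le> kernel_dim A"
proof -
  interpret K: kernel N N A by unfold_locales (rule A)
  have "\<not> K.NC.lin_dep B"
  proof
    assume "K.NC.lin_dep B"
    then obtain U a v where U: "finite U" "U \<subseteq> B" and lc: "K.NC.lincomb a U = 0\<^sub>v N"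
      and v: "v \<in> U" "a v \<noteq> 0"
      unfolding K.NC.lin_dep_def by auto
    have U_carrier: "U \<subseteq> carrier_vec N" using U B_carrier by auto
    have "dim_vec (K.NC.lincomb a U) = N" using lc by (metis index_zero_vec(2))
    then have "v \<bullet> K.NC.lincomb a U = (\<Sum>i\<in>{0..<N}. v $ i * K.NC.lincomb a U $ i)"
      unfolding scalar_prod_def by simp
    also have "\<dots> = (\<Sum>i\<in>{0..<N}. v $ i * (\<Sum>u\<in>U. a u * u $ i))"
      by (intro sum.cong refl) (simp add: K.NC.lincomb_index[OF _ U_carrier])
    also have "\<dots> = (\<Sum>u\<in>U. a u * (v \<bullet> u))"
      using U_carrier by (auto simp: scalar_prod_def sum_distrib_left mult_ac sum.swap[of _ U] intro!: sum.cong)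
    also have "\<dots> = (\<Sum>u\<in>U. if u = v then a u else 0)"
    proof (intro sum.cong refl)
      fix u assume "u \<in> U"
      then have "u \<in> B" "v \<in> B" using U(2) v(1) by auto
      then have "v \<bullet> u = (if u = v then 1 else 0)" using orth[of v u] by auto
      then show "a u * (v \<bullet> u) = (if u = v then a u else 0)" by simp
    qed
    also have "\<dots> = a v" using U v by simp
    finally show False using lc v U_carrier by auto
  qed
  then have "K.lin_indpt B" using K.lindep_same[OF B] by simp
  moreover obtain B0 where "finite B0" "kernel.basis N A B0" using kernel_basis_exists[OF A] by auto
  then have "K.Ker.fin_dim" unfolding K.Ker.fin_dim_def K.Ker.basis_def by auto
  ultimately show ?thesis using K.Ker.li_le_dim(2) B by simp
qed

lemma rev_sort_nth_less:
  fixes xs :: "'a :: linorder list"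
  assumes m: "m < length xs" and le: "\<forall>x \<in> set xs. x \<le> c" and count: "count (mset xs) c \<le> m"
  shows "rev (sort xs) ! m < c"
proof (rule ccontr)
  define ys where "ys = rev (sort xs)"
  assume "\<not> rev (sort xs) ! m < c"
  then have "c \<le> ys ! m" by (simp add: ys_def)
  have "ys ! i = c" if "i \<le> m" for i
  proof -
    have "ys ! m \<le> ys ! i"
      using that m by (simp add: ys_def rev_nth sorted_nth_mono)
    moreover have "ys ! i \<in> set xs" using that m by (metis ys_def le_less_trans length_rev length_sort nth_mem set_rev set_sort)
    ultimately show ?thesis using \<open>c \<le> ys ! m\<close> le by fastforce
  qed
  then have "take (Suc m) ys = replicate (Suc m) c"
    using m by (intro nth_equalityI) (auto simp: ys_def nth_Cons split: nat.split)
  moreover have "count (mset ys) c = count (mset (take (Suc m) ys)) c + count (mset (drop (Suc m) ys)) c"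
    by (metis append_take_drop_id count_union mset_append)
  ultimately have "Suc m \<le> count (mset ys) c" by simp
  then show False using count by (simp add: ys_def)
qed

lemma count_mset_map_upt:
  "count (mset (map f [0..<n])) c = card {l. l < n \<and> f l = c}"
  unfolding count_mset count_list_eq_length_filter length_filter_conv_card
  by (rule arg_cong[of _ _ card]) auto

lemma gram_sandwich_diag:
  fixes Phi :: "real mat"
  assumes Phi: "Phi \<in> carrier_mat N N" and V: "orthogonal_mat N V"
    and gram: "Phi\<^sup>T * Phi = V * mat_diag N \<mu> * V\<^sup>T" and l: "l < N"
  shows "\<mu> l = (Phi *\<^sub>v (V *\<^sub>v unit_vec N l)) \<bullet> (Phi *\<^sub>v (V *\<^sub>v unit_vec N l))"
proof -
  let ?v = "V *\<^sub>v unit_vec N l"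
  have v: "?v \<in> carrier_vec N" using orthogonal_matD(1)[OF V] by simp
  have "\<mu> l = ?v \<bullet> (Phi\<^sup>T *\<^sub>v (Phi *\<^sub>v ?v))"
    using sandwich_quadratic_form_unit_vec[OF V l, of \<mu>] Phi v
    by (simp add: gram[symmetric] assoc_mult_mat_vec[of _ N N _ N])
  also have "\<dots> = (Phi *\<^sub>v ?v) \<bullet> (Phi *\<^sub>v ?v)"
    using Phi v by (subst comm_scalar_prod[of _ N]) (auto intro: transpose_vec_mult_scalar)
  finally show ?thesis .
qed

lemma eigs_desc_gram_less_one:
  fixes Phi K :: "real mat"
  assumes Phi: "Phi \<in> carrier_mat N N" and K: "K \<in> carrier_mat N N"
    and contr: "\<And>x. x \<in> carrier_vec N \<Longrightarrow> (Phi *\<^sub>v x) \<bullet> (Phi *\<^sub>v x) \<le> x \<bullet> x"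
    and iso: "\<And>x. x \<in> carrier_vec N \<Longrightarrow> (Phi *\<^sub>v x) \<bullet> (Phi *\<^sub>v x) = x \<bullet> x \<Longrightarrow> K *\<^sub>v x = 0\<^sub>v N"
    and dim: "kernel_dim K < N"
  shows "eigs_desc (Phi\<^sup>T * Phi) ! kernel_dim K < 1"
proof -
  have "(Phi\<^sup>T * Phi)\<^sup>T = Phi\<^sup>T * Phi" using Phi by (simp add: transpose_mult[of _ N N _ N])
  then obtain V \<mu> where V: "orthogonal_mat N V" and P_eq: "Phi\<^sup>T * Phi = V * mat_diag N \<mu> * V\<^sup>T"
    using real_symmetric_spectral[of "Phi\<^sup>T * Phi" N] Phi by auto
  have Vc: "V \<in> carrier_mat N N" using orthogonal_matD[OF V] by simp
  define v where "v l = V *\<^sub>v unit_vec N l" for l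
  have v: "v l \<in> carrier_vec N" for l using Vc by (simp add: v_def)
  have v_inner: "v l \<bullet> v k = (if l = k then 1 else 0)" if "l < N" "k < N" for l k
    unfolding v_def using orthogonal_mat_inner[OF V] that by simp
  have \<mu>: "\<mu> l = (Phi *\<^sub>v v l) \<bullet> (Phi *\<^sub>v v l)" if "l < N" for l
    unfolding v_def by (rule gram_sandwich_diag[OF Phi V P_eq that])
  have "\<mu> l \<le> 1" if "l < N" for l
    using \<mu>[OF that] contr[OF v, of l] v_inner[OF that that] by simp
  then have \<mu>_le: "\<forall>x \<in> set (map \<mu> [0..<N]). x \<le> 1" by auto
  define S where "S = {l. l < N \<and> \<mu> l = 1}"
  have "inj_on v S"
    by (rule inj_onI) (metis (mono_tags) S_def mem_Collect_eq v_inner zero_neq_one)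
  moreover have "card (v ` S) \<le> kernel_dim K"
  proof (rule card_orthonormal_le_kernel_dim[OF K])
    show "v ` S \<subseteq> mat_kernel K"
      using \<mu> v_inner iso[OF v] v K by (auto simp: S_def mat_kernel_def)
    show "v ` S \<subseteq> carrier_vec N" using v by auto
    show "a \<bullet> b = (if a = b then 1 else 0)" if "a \<in> v ` S" "b \<in> v ` S" for a b :: "real vec"
      using that v_inner by (auto simp: S_def)
  qed
  ultimately have "count (mset (map \<mu> [0..<N])) 1 \<le> kernel_dim K"
    unfolding count_mset_map_upt by (simp add: card_image S_def)
  then show ?thesis
    using rev_sort_nth_less[OF _ \<mu>_le] dim by (simp add: P_eq eigs_desc_sandwich[OF V])
qed

theorem lemma10:
  fixes n d :: nat
    and W :: "real \<Rightarrow> nat \<Rightarrow> nat \<Rightarrow> real mat"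
    and tk :: "nat \<Rightarrow> real"
    and \<alpha> :: real
    and k' k'' :: nat
  assumes n_gt: "n > 1" and d_pos: "d > 0"
    and W_carrier: "\<And>t i j. i < n \<Longrightarrow> j < n \<Longrightarrow> W t i j \<in> carrier_mat d d"
    and W_sym_mat: "\<And>t i j. i < n \<Longrightarrow> j < n \<Longrightarrow> (W t i j)\<^sup>T = W t i j"
    and W_sym: "\<And>t i j. i < n \<Longrightarrow> j < n \<Longrightarrow> W t i j = W t j i"
    and W_diag: "\<And>t i. i < n \<Longrightarrow> W t i i = 0\<^sub>m d d"
    and W_sign: "\<And>i j. i < n \<Longrightarrow> j < n \<Longrightarrow>
                    (\<forall>t. psd_mat d (W t i j)) \<or> (\<forall>t. nsd_mat d (W t i j))"
    and t0: "tk 0 = 0"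
    and t_inf: "filterlim tk at_top sequentially"
    and alpha_pos: "\<alpha> > 0"
    and dwell: "\<And>k. tk (Suc k) - tk k \<ge> \<alpha>"
    and piecewise_const: "\<And>k t. tk k \<le> t \<Longrightarrow> t < tk (Suc k) \<Longrightarrow> W t = W (tk k)"
    and kk: "k' < k''"
    and m_lt: "kernel_dim (mat (d * n) (d * n) (\<lambda>(p, q).
                 integral {tk k'..<tk k''} (\<lambda>t. mw_laplacian d n (W t) $$ (p, q))
                 / (tk k'' - tk k'))) < d * n"
  shows "(let Phi = trans_mat (d * n) (\<lambda>k. mw_laplacian d n (W (tk k))) tk k' (k'' - k');
              m = kernel_dim (mat (d * n) (d * n) (\<lambda>(p, q).
                 integral {tk k'..<tk k''} (\<lambda>t. mw_laplacian d n (W t) $$ (p, q))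
                 / (tk k'' - tk k')))
          in eigs_desc (Phi\<^sup>T * Phi) ! m < 1)"
proof -
  define Lk where "Lk k = mw_laplacian d n (W (tk k))" for k
  define Phi where "Phi = trans_mat (d * n) Lk tk k' (k'' - k')"
  have t_mono: "tk k < tk (Suc k)" for k using dwell[of k] alpha_pos by linarith
  have "(Lk k)\<^sup>T = Lk k" for k
    unfolding Lk_def using W_carrier W_sym_mat W_sym by (intro mw_laplacian_symmetric)
  moreover have "\<forall>x \<in> carrier_vec (d * n). 0 \<le> x \<bullet> (Lk k *\<^sub>v x)" for k
    unfolding Lk_def using W_carrier W_sym W_sign by (blast intro: mw_laplacian_psd)
  ultimately have Phi: "Phi \<in> carrier_mat (d * n) (d * n) \<and> (\<forall>x \<in> carrier_vec (d * n).
      (Phi *\<^sub>v x) \<bullet> (Phi *\<^sub>v x) \<le> x \<bullet> x \<and> ((Phi *\<^sub>v x) \<bullet> (Phi *\<^sub>v x) = x \<bullet> x \<longrightarrow>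
        Phi *\<^sub>v x = x \<and> (\<forall>k. k' \<le> k \<longrightarrow> k < k'' \<longrightarrow> Lk k *\<^sub>v x = 0\<^sub>v (d * n))))"
    using trans_mat_contraction[of Lk "d * n" tk k' "k'' - k'"] kk unfolding Phi_def
    by (simp add: Lk_def t_mono)
  then have "mat (d * n) (d * n) (\<lambda>(p, q). integral {tk k'..<tk k''} (\<lambda>t. mw_laplacian d n (W t) $$ (p, q))
      / (tk k'' - tk k')) *\<^sub>v x = 0\<^sub>v (d * n)"
    if "x \<in> carrier_vec (d * n)" "(Phi *\<^sub>v x) \<bullet> (Phi *\<^sub>v x) = x \<bullet> x" for x
    using that t_mono kk piecewise_const
    by (intro average_piecewise_constant_mult_vec_zero[where Mk = Lk]) (auto simp: Lk_def less_imp_le)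
  then show ?thesis
    using eigs_desc_gram_less_one[OF _ _ _ _ m_lt] Phi unfolding Let_def Phi_def Lk_def by auto
qed

end
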